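(* Let $C<\infty$. For each $n$, let $X_1,\dots,X_n$ be independent random variables taking values in $[0,1]$, where each $X_i$ has a continuous density $f_{X_i}$ with $\sup_x f_{X_i}(x)\le C$ ($C$ independent of $n$ and $i$). Let $X_{(1)}\le\dots\le X_{(n)}$ be the order statistics and $T=\min_{1\le i\le n-1}(X_{(i+1)}-X_{(i)})$. Then for every $\eta>0$ and every $x>0$, \[ \Pr\big(n^{2+\eta}T>x\big)\to1\quad(n\to\infty), \] i.e. $n^{2+\eta}T\to\infty$ in probability. *)

theory Defs
  imports "HOL-Probability.Probability"
begin

text \<open>Minimal spacing of a list of reals: sort the values (order statistics
  X_(1) <= ... <= X_(n)) and take the minimum of consecutive differences
  X_(i+1) - X_(i), 1 <= i <= n-1 (meaningful for length >= 2).\<close>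
definition min_spacing :: "real list \<Rightarrow> real" where
  "min_spacing xs = (let ys = sort xs in Min {ys ! (i+1) - ys ! i | i. i + 1 < length ys})"

end

theory Submission
  imports Defs
begin

text \<open>If \<open>Y\<close> and \<open>Z\<close> are independent and \<open>Z\<close> has a density bounded by \<open>C\<close>, then
  conditionally on \<open>Y\<close> the variable \<open>Z\<close> must land in an interval of length \<open>2 e\<close> for
  \<open>\<bar>Y - Z\<bar> \<le> e\<close>, which has probability at most \<open>2 C e\<close>. A union bound over the fewer
  than \<open>n\<^sup>2\<close> pairs of indices shows that the minimal spacing exceeds \<open>e\<close> with probability
  at least \<open>1 - 2 C n\<^sup>2 e\<close>. For \<open>e = x / n powr (2 + \<eta>)\<close> this is \<open>1 - 2 C x n powr - \<eta>\<close>,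
  which tends to \<open>1\<close>.\<close>

lemma sorted_wrt_symp_iff_nth:
  assumes "symp S"
  shows "sorted_wrt S xs \<longleftrightarrow> (\<forall>i<length xs. \<forall>j<length xs. i \<noteq> j \<longrightarrow> S (xs ! i) (xs ! j))"
  unfolding sorted_wrt_iff_nth_less
proof safe
  fix i j assume H: "\<forall>i j. i < j \<longrightarrow> j < length xs \<longrightarrow> S (xs ! i) (xs ! j)"
    and ij: "i < length xs" "j < length xs" "i \<noteq> j"
  show "S (xs ! i) (xs ! j)"
  proof (cases "i < j")
    case True
    then show ?thesis using H ij by blast
  next
    case False
    then have "S (xs ! j) (xs ! i)" using H ij by simp
    then show ?thesis by (rule sympD[OF assms])
  qed
qed auto

lemma sorted_wrt_symp_iff_distinct:
  assumes "symp S" "irreflp S"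
  shows "sorted_wrt S xs \<longleftrightarrow> distinct xs \<and> (\<forall>a\<in>set xs. \<forall>b\<in>set xs. a \<noteq> b \<longrightarrow> S a b)"
proof (induction xs)
  case (Cons x xs)
  have "(\<forall>y\<in>set xs. S x y) \<longleftrightarrow> x \<notin> set xs \<and> (\<forall>y\<in>set xs. x \<noteq> y \<longrightarrow> S x y \<and> S y x)"
    using assms by (metis irreflpD sympD)
  with Cons show ?case by auto
qed simp

lemma sorted_wrt_sort_iff:
  assumes "symp S" "irreflp S"
  shows "sorted_wrt S (sort xs) \<longleftrightarrow> sorted_wrt S xs"
  using assms by (simp add: sorted_wrt_symp_iff_distinct)

lemma sorted_wrt_add_less_iff_abs_gt:
  fixes ys :: "real list"
  assumes "sorted ys" "0 \<le> e"
  shows "sorted_wrt (\<lambda>a b. a + e < b) ys \<longleftrightarrow> sorted_wrt (\<lambda>a b. e < \<bar>a - b\<bar>) ys"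
  unfolding sorted_wrt_iff_nth_less
  using assms sorted_nth_mono[OF assms(1)] by (smt (verit) less_imp_le)

lemma min_spacing_gt_iff_sorted_wrt:
  assumes "2 \<le> length xs" "0 \<le> e"
  shows "e < min_spacing xs \<longleftrightarrow> sorted_wrt (\<lambda>a b. a + e < b) (sort xs)"
proof -
  let ?ys = "sort xs"
  have gaps: "{?ys ! (i+1) - ?ys ! i | i. i + 1 < length ?ys}
      = (\<lambda>i. ?ys ! (i+1) - ?ys ! i) ` {..<length xs - 1}"
    by force
  have "{..<length xs - 1} \<noteq> {}"
    using assms(1) by (simp add: lessThan_empty_iff)
  then have "e < min_spacing xs \<longleftrightarrow> (\<forall>i\<in>{..<length xs - 1}. e < ?ys ! (i+1) - ?ys ! i)"
    unfolding min_spacing_def Let_def gaps by (subst Min_gr_iff) simp_all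
  also have "\<dots> \<longleftrightarrow> (\<forall>i. Suc i < length ?ys \<longrightarrow> ?ys ! i + e < ?ys ! Suc i)"
    by (auto simp: Ball_def less_diff_conv)
  also have "\<dots> \<longleftrightarrow> sorted_wrt (\<lambda>a b. a + e < b) ?ys"
    using assms(2) by (intro sorted_wrt_iff_nth_Suc_transp[symmetric]) (auto intro: transpI)
  finally show ?thesis .
qed

lemma min_spacing_gt_iff:
  assumes "2 \<le> length xs" "0 \<le> e"
  shows "e < min_spacing xs \<longleftrightarrow> (\<forall>i<length xs. \<forall>j<length xs. i \<noteq> j \<longrightarrow> e < \<bar>xs ! i - xs ! j\<bar>)"
proof -
  have far: "symp (\<lambda>a b :: real. e < \<bar>a - b\<bar>)" "irreflp (\<lambda>a b :: real. e < \<bar>a - b\<bar>)"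
    using assms(2) by (auto intro!: sympI irreflpI)
  have "e < min_spacing xs \<longleftrightarrow> sorted_wrt (\<lambda>a b. e < \<bar>a - b\<bar>) (sort xs)"
    using assms by (simp add: min_spacing_gt_iff_sorted_wrt sorted_wrt_add_less_iff_abs_gt)
  also have "\<dots> \<longleftrightarrow> sorted_wrt (\<lambda>a b. e < \<bar>a - b\<bar>) xs"
    by (rule sorted_wrt_sort_iff[OF far])
  finally show ?thesis
    by (simp only: sorted_wrt_symp_iff_nth[OF far(1)])
qed

lemma (in prob_space) indep_var_from_indep_vars:
  assumes "indep_vars M' X I" "i \<in> I" "j \<in> I" "i \<noteq> j"
  shows "indep_var (M' i) (X i) (M' j) (X j)"
proof -
  have "indep_var (M' i) ((\<lambda>f. f i) \<circ> (\<lambda>\<omega>. restrict (\<lambda>k. X k \<omega>) {i}))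
      (M' j) ((\<lambda>f. f j) \<circ> (\<lambda>\<omega>. restrict (\<lambda>k. X k \<omega>) {j}))"
    using assms
    by (intro indep_var_compose[of "PiM {i} M'" _ "PiM {j} M'"] indep_var_restrict
        measurable_component_singleton) auto
  then show ?thesis
    by (simp add: comp_def)
qed

lemma emeasure_distr_atLeastAtMost_le:
  assumes "distributed M lborel Z (\<lambda>x. ennreal (h x))" "\<And>x. h x \<le> C" "0 \<le> C" "a \<le> b"
  shows "emeasure (distr M borel Z) {a..b} \<le> ennreal (C * (b - a))"
proof -
  have "distr M borel Z = distr M lborel Z"
    by (rule distr_cong) simp_all
  then have "emeasure (distr M borel Z) {a..b} = (\<integral>\<^sup>+x. ennreal (h x) * indicator {a..b} x \<partial>lborel)"
    using assms(1) by (simp add: distributed_distr_eq_density emeasure_density distributed_borel_measurable)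
  also have "\<dots> \<le> (\<integral>\<^sup>+x. ennreal C * indicator {a..b} x \<partial>lborel)"
    using assms(2) by (intro nn_integral_mono) (auto simp: indicator_def ennreal_leI)
  also have "\<dots> = ennreal (C * (b - a))"
    using assms(3,4) by (simp add: nn_integral_cmult_indicator ennreal_mult)
  finally show ?thesis .
qed

lemma (in prob_space) prob_abs_diff_le_bounded_density:
  assumes "indep_var borel Y borel Z"
    and "distributed M lborel Z (\<lambda>x. ennreal (h x))" "\<And>x. h x \<le> C" "0 \<le> C" "0 \<le> e"
  shows "prob {\<omega> \<in> space M. \<bar>Y \<omega> - Z \<omega>\<bar> \<le> e} \<le> 2 * C * e"
proof -
  have [measurable]: "Y \<in> borel_measurable M" "Z \<in> borel_measurable M"
    using indep_var_rv1[OF assms(1)] indep_var_rv2[OF assms(1)] by simp_all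
  interpret Y: prob_space "distr M borel Y"
    by (rule prob_space_distr) simp
  interpret Z: prob_space "distr M borel Z"
    by (rule prob_space_distr) simp
  define S where "S = {p :: real \<times> real. \<bar>fst p - snd p\<bar> \<le> e}"
  have S: "S \<in> sets (borel \<Otimes>\<^sub>M borel)"
  proof -
    have "{p \<in> space (borel \<Otimes>\<^sub>M borel). \<bar>fst p - snd p\<bar> \<le> e} \<in> sets (borel \<Otimes>\<^sub>M borel)"
      by measurable
    then show ?thesis
      by (simp add: S_def space_pair_measure)
  qed
  have "emeasure M {\<omega> \<in> space M. \<bar>Y \<omega> - Z \<omega>\<bar> \<le> e}
      = emeasure (distr M (borel \<Otimes>\<^sub>M borel) (\<lambda>\<omega>. (Y \<omega>, Z \<omega>))) S"
    using S by (subst emeasure_distr) (auto simp: S_def intro!: arg_cong[where f="emeasure M"])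
  also have "\<dots> = emeasure (distr M borel Y \<Otimes>\<^sub>M distr M borel Z) S"
    using assms(1) by (simp add: indep_var_distribution_eq)
  also have "\<dots> = (\<integral>\<^sup>+y. emeasure (distr M borel Z) (Pair y -` S) \<partial>distr M borel Y)"
    using S by (intro Z.emeasure_pair_measure_alt) (simp cong: sets_pair_measure_cong)
  also have "\<dots> \<le> (\<integral>\<^sup>+y. ennreal (2 * C * e) \<partial>distr M borel Y)"
  proof (rule nn_integral_mono)
    fix y
    have "Pair y -` S = {y - e..y + e}"
      by (auto simp: S_def)
    then show "emeasure (distr M borel Z) (Pair y -` S) \<le> ennreal (2 * C * e)"
      using emeasure_distr_atLeastAtMost_le[OF assms(2-4), of "y - e" "y + e"] assms(5) by (simp add: mult_ac)
  qed
  also have "\<dots> = ennreal (2 * C * e)"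
    using Y.emeasure_space_1 by simp
  finally show ?thesis
    using assms(4,5) by (simp add: emeasure_eq_measure ennreal_le_iff)
qed

lemma (in prob_space) prob_min_spacing_gt_ge:
  fixes X :: "nat \<Rightarrow> 'a \<Rightarrow> real"
  assumes indep: "indep_vars (\<lambda>_. borel) X {..<n}"
    and dens: "\<And>i. i < n \<Longrightarrow> distributed M lborel (X i) (\<lambda>x. ennreal (h i x))"
    and bound: "\<And>i x. i < n \<Longrightarrow> h i x \<le> C"
    and "0 \<le> C" "2 \<le> n" "0 \<le> e"
  shows "1 - real n ^ 2 * (2 * C * e) \<le> prob {\<omega> \<in> space M. e < min_spacing (map (\<lambda>i. X i \<omega>) [0..<n])}"
proof -
  define P where "P = {p \<in> {..<n} \<times> {..<n}. fst p \<noteq> snd p}"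
  define E where "E p = {\<omega> \<in> space M. \<bar>X (fst p) \<omega> - X (snd p) \<omega>\<bar> \<le> e}" for p
  have "finite P"
    by (simp add: P_def)
  have E_events: "E p \<in> events" if "p \<in> P" for p
  proof -
    have "X i \<in> borel_measurable M" if "i < n" for i
      using distributed_measurable[OF dens[OF that]] by simp
    then have [measurable]: "X (fst p) \<in> borel_measurable M" "X (snd p) \<in> borel_measurable M"
      using that by (auto simp: P_def)
    show ?thesis
      unfolding E_def by measurable
  qed
  have "{\<omega> \<in> space M. e < min_spacing (map (\<lambda>i. X i \<omega>) [0..<n])} = space M - (\<Union>p\<in>P. E p)"
    using assms(5,6) by (auto simp: min_spacing_gt_iff P_def E_def not_le) (meson not_less)
  then have "prob {\<omega> \<in> space M. e < min_spacing (map (\<lambda>i. X i \<omega>) [0..<n])} = 1 - prob (\<Union>p\<in>P. E p)"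
    using E_events \<open>finite P\<close> by (simp add: prob_compl sets.finite_UN)
  moreover have "prob (E p) \<le> 2 * C * e" if "p \<in> P" for p
  proof -
    have "fst p < n" "snd p < n" "fst p \<noteq> snd p"
      using that by (auto simp: P_def)
    then show ?thesis
      unfolding E_def
      by (intro prob_abs_diff_le_bounded_density[OF indep_var_from_indep_vars[OF indep] dens bound])
        (use assms in auto)
  qed
  then have "prob (\<Union>p\<in>P. E p) \<le> real (card P) * (2 * C * e)"
    using E_events \<open>finite P\<close> sum_mono[of P "\<lambda>p. prob (E p)" "\<lambda>_. 2 * C * e"]
      finite_measure_subadditive_finite[of P E] by fastforce
  moreover have "real (card P) \<le> real n ^ 2"
  proof -
    have "card P \<le> card ({..<n} \<times> {..<n})"
      by (intro card_mono) (auto simp: P_def)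
    then show ?thesis
      by (simp add: card_cartesian_product power2_eq_square flip: of_nat_mult)
  qed
  ultimately show ?thesis
    using assms(4,6) mult_right_mono[of "real (card P)" "real n ^ 2" "2 * C * e"] by simp
qed

lemma (in prob_space) prob_scaled_min_spacing_gt_ge:
  fixes X :: "nat \<Rightarrow> 'a \<Rightarrow> real"
  assumes "indep_vars (\<lambda>_. borel) X {..<n}"
    and "\<And>i. i < n \<Longrightarrow> distributed M lborel (X i) (\<lambda>x. ennreal (h i x))"
    and "\<And>i x. i < n \<Longrightarrow> h i x \<le> C"
    and "0 \<le> C" "2 \<le> n" "0 < x" "0 < s"
  shows "1 - 2 * C * x * real n ^ 2 / s
    \<le> prob {\<omega> \<in> space M. s * min_spacing (map (\<lambda>i. X i \<omega>) [0..<n]) > x}"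
proof -
  have "1 - 2 * C * x * real n ^ 2 / s = 1 - real n ^ 2 * (2 * C * (x / s))"
    by simp
  also have "\<dots> \<le> prob {\<omega> \<in> space M. x / s < min_spacing (map (\<lambda>i. X i \<omega>) [0..<n])}"
    using assms(4-7) by (intro prob_min_spacing_gt_ge[OF assms(1-3)]) auto
  also have "{\<omega> \<in> space M. x / s < min_spacing (map (\<lambda>i. X i \<omega>) [0..<n])}
      = {\<omega> \<in> space M. s * min_spacing (map (\<lambda>i. X i \<omega>) [0..<n]) > x}"
    using \<open>0 < s\<close> by (simp add: pos_divide_less_eq mult.commute)
  finally show ?thesis .
qed

theorem lemma7:
  fixes C :: real
    and M :: "nat \<Rightarrow> 'a measure"
    and X :: "nat \<Rightarrow> nat \<Rightarrow> 'a \<Rightarrow> real"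
    and f :: "nat \<Rightarrow> nat \<Rightarrow> real \<Rightarrow> real"
  assumes prob: "\<And>n. prob_space (M n)"
    and indep: "\<And>n. prob_space.indep_vars (M n) (\<lambda>_. borel) (X n) {..<n}"
    and range01: "\<And>n i \<omega>. i < n \<Longrightarrow> \<omega> \<in> space (M n) \<Longrightarrow> X n i \<omega> \<in> {0..1}"
    and dens: "\<And>n i. i < n \<Longrightarrow> distributed (M n) lborel (X n i) (\<lambda>x. ennreal (f n i x))"
    and dens_nonneg: "\<And>n i x. i < n \<Longrightarrow> 0 \<le> f n i x"
    and dens_cont: "\<And>n i. i < n \<Longrightarrow> continuous_on {0..1} (f n i)"
    and dens_bound: "\<And>n i x. i < n \<Longrightarrow> f n i x \<le> C"
  shows "\<forall>\<eta>>0. \<forall>x>0.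
    (\<lambda>n. measure (M n) {\<omega> \<in> space (M n).
        real n powr (2 + \<eta>) * min_spacing (map (\<lambda>i. X n i \<omega>) [0..<n]) > x})
    \<longlonglongrightarrow> 1"
proof (intro allI impI)
  fix \<eta> x :: real
  assume "0 < \<eta>" "0 < x"
  define p where "p n = measure (M n) {\<omega> \<in> space (M n).
      real n powr (2 + \<eta>) * min_spacing (map (\<lambda>i. X n i \<omega>) [0..<n]) > x}" for n
  have "0 \<le> C"
    using dens_nonneg[of 0 1 0] dens_bound[of 0 1 0] by linarith
  have "1 - 2 * C * x * real n powr - \<eta> \<le> p n" if "2 \<le> n" for n
  proof -
    have "2 * C * x * real n ^ 2 / real n powr (2 + \<eta>) = 2 * C * x * real n powr - \<eta>"
      using that by (simp add: powr_add powr_minus_divide power2_eq_square)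
    moreover have "1 - 2 * C * x * real n ^ 2 / real n powr (2 + \<eta>) \<le> p n"
      unfolding p_def using that
      by (intro prob_space.prob_scaled_min_spacing_gt_ge[OF prob indep dens dens_bound \<open>0 \<le> C\<close> _ \<open>0 < x\<close>])
        auto
    ultimately show ?thesis
      by (simp only:)
  qed
  then have "\<forall>\<^sub>F n in sequentially. 1 - 2 * C * x * real n powr - \<eta> \<le> p n"
    by (rule eventually_sequentiallyI)
  moreover have "\<forall>\<^sub>F n in sequentially. p n \<le> 1"
    using prob by (simp add: p_def prob_space.prob_le_1)
  moreover have "(\<lambda>n. 1 - 2 * C * x * real n powr - \<eta>) \<longlonglongrightarrow> 1 - 2 * C * x * 0"
    using \<open>0 < \<eta>\<close> by (intro tendsto_intros tendsto_neg_powr filterlim_real_sequentially) auto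
  ultimately have "p \<longlonglongrightarrow> 1"
    using tendsto_sandwich[OF _ _ _ tendsto_const] by simp
  then show "(\<lambda>n. measure (M n) {\<omega> \<in> space (M n).
      real n powr (2 + \<eta>) * min_spacing (map (\<lambda>i. X n i \<omega>) [0..<n]) > x}) \<longlonglongrightarrow> 1"
    unfolding p_def .
qed

end
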